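(* Let $\mathcal{H}$ be a separable Hilbert space with a fixed orthonormal basis $\mathcal{B}=\{e_k\}_{k\in\mathbb{N}}$, let $\mathcal{S}$ be a closed subspace of $\mathcal{H}$, and for $n\in\mathbb{N}$ put $\mathcal{H}_n=\mathrm{span}\{e_1,\dots,e_n\}$ and $\mathcal{S}_n=\mathcal{S}\cap\mathcal{H}_n$. The following are equivalent: (1) $\mathcal{S}$ is $\mathcal{B}$-compatible; (2) (a) $\bigcup_{n\ge1}\mathcal{S}_n$ is dense in $\mathcal{S}$, and (b) there exists $M>0$ such that $K[\mathcal{S}_n,\mathcal{D}]=\sup_{Q\in\mathcal{P}(\mathcal{D})}\|P_{Q,\mathcal{S}_n}\|\le M$ for every $n\in\mathbb{N}$.
   Context: $\mathcal{D}$ is the algebra of operators diagonal with respect to $\mathcal{B}$; $\mathcal{P}(\mathcal{D})$ is the set of (orthogonal) projections in $\mathcal{D}$. For a positive bounded $D$ and a closed subspace $\mathcal{T}$, the pair $(D,\mathcal{T})$ is compatible if there is a bounded idempotent $Q$ with range $\mathcal{T}$ and $DQ=Q^*D$; writing $D=\begin{pmatrix} a & b\\ b^* & c\end{pmatrix}$ with respect to $\mathcal{T}\oplus\mathcal{T}^\perp$, this is equivalent to $R(b)\subseteq R(a)$, and then $P_{D,\mathcal{T}}:=\begin{pmatrix} 1 & d\\ 0&0\end{pmatrix}$ with $d$ the unique bounded operator $\mathcal{T}^\perp\to\mathcal{T}$ satisfying $ad=b$ and $R(d)\subseteq\overline{R(a)}$. Friedrichs angle cosine: $c[\mathcal{M},\mathcal{N}]=\sup\{|\langle\xi,\eta\rangle|:\xi\in\mathcal{M}\ominus(\mathcal{M}\cap\mathcal{N}),\eta\in\mathcal{N}\ominus(\mathcal{M}\cap\mathcal{N}),\|\xi\|=\|\eta\|=1\}$.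 A closed subspace $\mathcal{T}$ is $\mathcal{B}$-compatible if $c[\mathcal{T},\mathcal{D}]:=\sup_{Q\in\mathcal{P}(\mathcal{D})}c[\mathcal{T},R(Q)]<1$; then $K[\mathcal{T},\mathcal{D}]:=(1-c[\mathcal{T},\mathcal{D}]^2)^{-1/2}$. (Each $\mathcal{S}_n$ is $\mathcal{B}$-compatible, so the quantities in (b) are defined.) *)

theory Defs
  imports Complex_Main
begin

text \<open>Model: the separable Hilbert space H with fixed orthonormal basis B = {e_k}
  is (unitarily, basis-to-basis) identified with the complex space l2(N) with its
  standard basis; e_k is the k-th unit sequence (indices start at 0, so e_1,...,e_n
  of the paper are indices 0,...,n-1).\<close>

definition l2 :: "(nat \<Rightarrow> complex) set" where
  "l2 = {x. summable (\<lambda>k. (cmod (x k))\<^sup>2)}"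

definition l2inner :: "(nat \<Rightarrow> complex) \<Rightarrow> (nat \<Rightarrow> complex) \<Rightarrow> complex" where
  "l2inner x y = (\<Sum>k. x k * cnj (y k))"

definition l2norm :: "(nat \<Rightarrow> complex) \<Rightarrow> real" where
  "l2norm x = sqrt (\<Sum>k. (cmod (x k))\<^sup>2)"

definition closed_subspace :: "(nat \<Rightarrow> complex) set \<Rightarrow> bool" where
  "closed_subspace S \<longleftrightarrow> S \<subseteq> l2 \<and> (\<lambda>k. 0) \<in> S
     \<and> (\<forall>x\<in>S. \<forall>y\<in>S. (\<lambda>k. x k + y k) \<in> S)
     \<and> (\<forall>x\<in>S. \<forall>c::complex. (\<lambda>k. c * x k) \<in> S)
     \<and> (\<forall>(x::nat \<Rightarrow> nat \<Rightarrow> complex) z. (\<forall>n. x n \<in> S) \<and> z \<in> l2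
           \<and> (\<lambda>n. l2norm (\<lambda>k. x n k - z k)) \<longlonglongrightarrow> 0 \<longrightarrow> z \<in> S)"

definition Hn :: "nat \<Rightarrow> (nat \<Rightarrow> complex) set" where
  "Hn n = {x \<in> l2. \<forall>k\<ge>n. x k = 0}"

definition ominus :: "(nat \<Rightarrow> complex) set \<Rightarrow> (nat \<Rightarrow> complex) set \<Rightarrow> (nat \<Rightarrow> complex) set" where
  "ominus M N = {\<xi> \<in> M. \<forall>\<eta>\<in>N. l2inner \<xi> \<eta> = 0}"

text \<open>Cosine of the Friedrichs angle; the supremum of an empty set is taken to be 0.\<close>
definition friedrichs_cos :: "(nat \<Rightarrow> complex) set \<Rightarrow> (nat \<Rightarrow> complex) set \<Rightarrow> real" where
  "friedrichs_cos M N = Sup (insert 0 {cmod (l2inner \<xi> \<eta>) | \<xi> \<eta>.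
      \<xi> \<in> ominus M (M \<inter> N) \<and> \<eta> \<in> ominus N (M \<inter> N) \<and> l2norm \<xi> = 1 \<and> l2norm \<eta> = 1})"

text \<open>Ranges of the orthogonal projections in the diagonal algebra D: a projection
  diagonal w.r.t. B is multiplication by the indicator of some J \<subseteq> N.\<close>
definition diag_range :: "nat set \<Rightarrow> (nat \<Rightarrow> complex) set" where
  "diag_range J = {x \<in> l2. \<forall>k. k \<notin> J \<longrightarrow> x k = 0}"

definition cos_D :: "(nat \<Rightarrow> complex) set \<Rightarrow> real" where
  "cos_D T = (SUP J. friedrichs_cos T (diag_range J))"

definition B_compatible :: "(nat \<Rightarrow> complex) set \<Rightarrow> bool" where
  "B_compatible T \<longleftrightarrow> cos_D T < 1"

definition K_D :: "(nat \<Rightarrow> complex) set \<Rightarrow> real" where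
  "K_D T = 1 / sqrt (1 - (cos_D T)\<^sup>2)"

end

theory Submission imports Defs "HOL-Analysis.Analysis" begin

text \<open>For a subspace T one has cos_D T \<le> c iff every diagonal projection P_J satisfies
  \<parallel>P_J \<xi>\<parallel> \<le> c \<parallel>\<xi>\<parallel> on T \<ominus> (T \<inter> R(P_J)), i.e. (1 - c^2) \<parallel>\<xi>\<parallel>^2 \<le> \<parallel>(1 - P_J) \<xi>\<parallel>^2 there.
  If S satisfies this with c < 1, then so does every S_n, which bounds K[S_n, D]; and projecting
  x \<in> S onto S \<inter> H_n leaves an error \<xi> with (1 - c^2) \<parallel>\<xi>\<parallel>^2 \<le> \<parallel>(1 - P_{H_n}) x\<parallel>^2 \<rightarrow> 0, so the S_n
  are dense. Conversely, S_n is finite-dimensional, so compactness gives cos_D S_n < 1; the bound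
  on K[S_n, D] makes c uniform in n, and density carries the estimate over to S once the
  approximants from S_n are corrected to be orthogonal to S_n \<inter> R(P_J).\<close>

section \<open>The sequence space l2\<close>

lemma l2_add: "x \<in> l2 \<Longrightarrow> y \<in> l2 \<Longrightarrow> (\<lambda>k. x k + y k) \<in> l2"
proof -
  have "(cmod (a + b))\<^sup>2 \<le> 2 * (cmod a)\<^sup>2 + 2 * (cmod b)\<^sup>2" for a b :: complex
  proof -
    have "(cmod (a + b))\<^sup>2 \<le> (cmod a + cmod b)\<^sup>2"
      by (simp add: norm_triangle_ineq power_mono)
    also have "\<dots> \<le> 2 * (cmod a)\<^sup>2 + 2 * (cmod b)\<^sup>2"
      using zero_le_power2[of "cmod a - cmod b"] by (simp add: power2_eq_square algebra_simps)
    finally show ?thesis .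
  qed
  then show "x \<in> l2 \<Longrightarrow> y \<in> l2 \<Longrightarrow> (\<lambda>k. x k + y k) \<in> l2"
    unfolding l2_def
    by (auto intro!: summable_comparison_test'[where N=0 and g="\<lambda>k. 2 * (cmod (x k))\<^sup>2 + 2 * (cmod (y k))\<^sup>2"]
        summable_add summable_mult)
qed

lemma l2_scale: "x \<in> l2 \<Longrightarrow> (\<lambda>k. c * x k) \<in> l2"
  unfolding l2_def by (simp add: norm_mult power_mult_distrib summable_mult)

lemma l2_diff: "x \<in> l2 \<Longrightarrow> y \<in> l2 \<Longrightarrow> (\<lambda>k. x k - y k) \<in> l2"
  using l2_add[of x "\<lambda>k. (-1) * y k"] l2_scale[of y "-1"] by simp

lemma l2_finite_support: "\<forall>k\<ge>n. x k = 0 \<Longrightarrow> x \<in> l2"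
  unfolding l2_def mem_Collect_eq by (rule summable_finite[where N="{..<n}"]) auto

lemma summable_l2inner_norm: "x \<in> l2 \<Longrightarrow> y \<in> l2 \<Longrightarrow> summable (\<lambda>k. cmod (x k * cnj (y k)))"
proof (rule summable_comparison_test'[where N=0 and g="\<lambda>k. ((cmod (x k))\<^sup>2 + (cmod (y k))\<^sup>2) / 2"])
  show "x \<in> l2 \<Longrightarrow> y \<in> l2 \<Longrightarrow> summable (\<lambda>k. ((cmod (x k))\<^sup>2 + (cmod (y k))\<^sup>2) / 2)"
    unfolding l2_def by (auto intro!: summable_add summable_divide)
  show "norm (cmod (x k * cnj (y k))) \<le> ((cmod (x k))\<^sup>2 + (cmod (y k))\<^sup>2) / 2" for k
    using zero_le_power2[of "cmod (x k) - cmod (y k)"]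
    by (simp add: norm_mult power2_eq_square algebra_simps)
qed

lemma summable_l2inner: "x \<in> l2 \<Longrightarrow> y \<in> l2 \<Longrightarrow> summable (\<lambda>k. x k * cnj (y k))"
  by (rule summable_norm_cancel, rule summable_l2inner_norm)

lemma l2inner_add_left:
  "x \<in> l2 \<Longrightarrow> y \<in> l2 \<Longrightarrow> z \<in> l2 \<Longrightarrow> l2inner (\<lambda>k. x k + y k) z = l2inner x z + l2inner y z"
  unfolding l2inner_def by (simp add: distrib_right suminf_add summable_l2inner)

lemma l2inner_diff_left:
  "x \<in> l2 \<Longrightarrow> y \<in> l2 \<Longrightarrow> z \<in> l2 \<Longrightarrow> l2inner (\<lambda>k. x k - y k) z = l2inner x z - l2inner y z"
  unfolding l2inner_def by (simp add: left_diff_distrib suminf_diff summable_l2inner)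

lemma l2inner_scale_left: "x \<in> l2 \<Longrightarrow> z \<in> l2 \<Longrightarrow> l2inner (\<lambda>k. c * x k) z = c * l2inner x z"
  unfolding l2inner_def by (simp add: mult.assoc suminf_mult summable_l2inner)

lemma l2inner_commute: "x \<in> l2 \<Longrightarrow> y \<in> l2 \<Longrightarrow> l2inner y x = cnj (l2inner x y)"
proof -
  assume "x \<in> l2" "y \<in> l2"
  then have "(\<lambda>k. cnj (x k * cnj (y k))) sums cnj (l2inner x y)"
    unfolding l2inner_def by (intro sums_cnj[THEN iffD2] summable_sums summable_l2inner)
  then show ?thesis unfolding l2inner_def by (simp add: sums_iff mult.commute)
qed

lemma l2inner_add_right:
  "x \<in> l2 \<Longrightarrow> y \<in> l2 \<Longrightarrow> z \<in> l2 \<Longrightarrow> l2inner z (\<lambda>k. x k + y k) = l2inner z x + l2inner z y"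
  by (simp add: l2inner_commute[of _ z] l2_add l2inner_add_left)

lemma l2inner_scale_right: "x \<in> l2 \<Longrightarrow> z \<in> l2 \<Longrightarrow> l2inner z (\<lambda>k. c * x k) = cnj c * l2inner z x"
  by (simp add: l2inner_commute[of _ z] l2_scale l2inner_scale_left)

lemma l2inner_zero_left [simp]: "l2inner (\<lambda>k. 0) y = 0"
  unfolding l2inner_def by simp

lemma l2inner_zero_right [simp]: "l2inner y (\<lambda>k. 0) = 0"
  unfolding l2inner_def by simp

lemma l2norm_zero [simp]: "l2norm (\<lambda>k. 0) = 0"
  unfolding l2norm_def by simp

lemma l2norm_square: "x \<in> l2 \<Longrightarrow> (l2norm x)\<^sup>2 = (\<Sum>k. (cmod (x k))\<^sup>2)"
  unfolding l2norm_def l2_def by (simp add: suminf_nonneg)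

lemma l2norm_nonneg: "x \<in> l2 \<Longrightarrow> 0 \<le> l2norm x"
  unfolding l2norm_def l2_def by (simp add: suminf_nonneg)

lemma l2inner_self: "x \<in> l2 \<Longrightarrow> l2inner x x = of_real ((l2norm x)\<^sup>2)"
proof -
  assume x: "x \<in> l2"
  have "l2inner x x = (\<Sum>k. of_real ((cmod (x k))\<^sup>2))"
    unfolding l2inner_def by (simp add: complex_mult_cnj cmod_def)
  also have "\<dots> = of_real (\<Sum>k. (cmod (x k))\<^sup>2)"
    using x unfolding l2_def by (simp add: suminf_of_real)
  finally show ?thesis using l2norm_square[OF x] by simp
qed

lemma l2norm_eq_0_iff: "x \<in> l2 \<Longrightarrow> l2norm x = 0 \<longleftrightarrow> x = (\<lambda>k. 0)"
proof -
  assume x: "x \<in> l2"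
  have "l2norm x = 0 \<longleftrightarrow> (\<Sum>k. (cmod (x k))\<^sup>2) = 0"
    using l2norm_square[OF x] l2norm_nonneg[OF x] by auto
  also have "\<dots> \<longleftrightarrow> (\<forall>k. x k = 0)"
    using x unfolding l2_def by (subst suminf_eq_zero_iff) auto
  finally show ?thesis by auto
qed

lemma l2_coord_le_norm: "x \<in> l2 \<Longrightarrow> cmod (x i) \<le> l2norm x"
proof -
  assume x: "x \<in> l2"
  have "(cmod (x i))\<^sup>2 = (\<Sum>k\<in>{i}. (cmod (x k))\<^sup>2)" by simp
  also have "\<dots> \<le> (\<Sum>k. (cmod (x k))\<^sup>2)"
    using x unfolding l2_def by (intro sum_le_suminf) auto
  also have "\<dots> = (l2norm x)\<^sup>2"
    using l2norm_square[OF x] by simp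
  finally show ?thesis
    using l2norm_nonneg[OF x] by (rule power2_le_imp_le)
qed

lemma l2norm_scale: "x \<in> l2 \<Longrightarrow> l2norm (\<lambda>k. c * x k) = cmod c * l2norm x"
proof -
  assume "x \<in> l2"
  then have "(\<Sum>k. (cmod (c * x k))\<^sup>2) = (cmod c)\<^sup>2 * (\<Sum>k. (cmod (x k))\<^sup>2)"
    unfolding l2_def by (simp add: norm_mult power_mult_distrib suminf_mult)
  then show ?thesis
    unfolding l2norm_def by (simp add: real_sqrt_mult)
qed

lemma l2norm_diff_commute: "l2norm (\<lambda>k. x k - y k) = l2norm (\<lambda>k. y k - x k)"
  unfolding l2norm_def by (simp add: norm_minus_commute)

lemma l2norm_add_square: "x \<in> l2 \<Longrightarrow> y \<in> l2 \<Longrightarrow>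
  (l2norm (\<lambda>k. x k + y k))\<^sup>2 = (l2norm x)\<^sup>2 + 2 * Re (l2inner x y) + (l2norm y)\<^sup>2"
proof -
  assume x: "x \<in> l2" and y: "y \<in> l2"
  have "complex_of_real ((l2norm (\<lambda>k. x k + y k))\<^sup>2) = l2inner (\<lambda>k. x k + y k) (\<lambda>k. x k + y k)"
    using l2inner_self[OF l2_add[OF x y]] by simp
  also have "\<dots> = l2inner x x + l2inner x y + (l2inner y x + l2inner y y)"
    using x y by (simp add: l2_add l2inner_add_left l2inner_add_right)
  also have "\<dots> = of_real ((l2norm x)\<^sup>2) + (l2inner x y + cnj (l2inner x y)) + of_real ((l2norm y)\<^sup>2)"
    using x y by (simp add: l2inner_self l2inner_commute[of x y])
  finally have "Re (of_real ((l2norm (\<lambda>k. x k + y k))\<^sup>2))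
      = Re (of_real ((l2norm x)\<^sup>2) + (l2inner x y + cnj (l2inner x y)) + of_real ((l2norm y)\<^sup>2))"
    by (rule arg_cong)
  then show ?thesis by simp
qed

lemma l2norm_diff_square: "x \<in> l2 \<Longrightarrow> y \<in> l2 \<Longrightarrow>
  (l2norm (\<lambda>k. x k - y k))\<^sup>2 = (l2norm x)\<^sup>2 - 2 * Re (l2inner x y) + (l2norm y)\<^sup>2"
proof -
  assume x: "x \<in> l2" and y: "y \<in> l2"
  have "l2inner x (\<lambda>k. (-1) * y k) = - l2inner x y"
    using l2inner_scale_right[OF y x, of "-1"] by simp
  moreover have "l2norm (\<lambda>k. (-1) * y k) = l2norm y"
    using l2norm_scale[OF y, of "-1"] by simp
  ultimately show ?thesis
    using l2norm_add_square[OF x l2_scale[OF y, of "-1"]] by simp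
qed

text \<open>Cauchy-Schwarz, via the weighted AM-GM inequality applied termwise.\<close>

lemma l2inner_le_weighted:
  assumes x: "x \<in> l2" and y: "y \<in> l2" and t: "t > 0"
  shows "cmod (l2inner x y) \<le> (t * (l2norm x)\<^sup>2 + (l2norm y)\<^sup>2 / t) / 2"
proof -
  have sx: "summable (\<lambda>k. (cmod (x k))\<^sup>2)" and sy: "summable (\<lambda>k. (cmod (y k))\<^sup>2)"
    using x y by (auto simp: l2_def)
  have termwise: "cmod (x k * cnj (y k)) \<le> (t * (cmod (x k))\<^sup>2 + (cmod (y k))\<^sup>2 / t) / 2" for k
  proof -
    have "0 \<le> (t * cmod (x k) - cmod (y k))\<^sup>2 / t" using t by simp
    also have "\<dots> = t * (cmod (x k))\<^sup>2 + (cmod (y k))\<^sup>2 / t - 2 * (cmod (x k) * cmod (y k))"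
      using t by (simp add: power2_eq_square field_simps)
    finally show ?thesis by (simp add: norm_mult)
  qed
  have "cmod (l2inner x y) \<le> (\<Sum>k. cmod (x k * cnj (y k)))"
    unfolding l2inner_def by (rule summable_norm[OF summable_l2inner_norm[OF x y]])
  also have "\<dots> \<le> (\<Sum>k. (t * (cmod (x k))\<^sup>2 + (cmod (y k))\<^sup>2 / t) / 2)"
    by (intro suminf_le termwise summable_l2inner_norm[OF x y] summable_divide summable_add
        summable_mult sx sy)
  also have "\<dots> = (\<Sum>k. t * (cmod (x k))\<^sup>2 + (cmod (y k))\<^sup>2 / t) / 2"
    by (rule suminf_divide) (intro summable_add summable_mult summable_divide sx sy)
  also have "(\<Sum>k. t * (cmod (x k))\<^sup>2 + (cmod (y k))\<^sup>2 / t)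
      = (\<Sum>k. t * (cmod (x k))\<^sup>2) + (\<Sum>k. (cmod (y k))\<^sup>2 / t)"
    by (rule suminf_add[symmetric]) (intro summable_mult summable_divide sx sy)+
  also have "(\<Sum>k. t * (cmod (x k))\<^sup>2) = t * (\<Sum>k. (cmod (x k))\<^sup>2)"
    by (rule suminf_mult[OF sx])
  also have "(\<Sum>k. (cmod (y k))\<^sup>2 / t) = (\<Sum>k. (cmod (y k))\<^sup>2) / t"
    by (rule suminf_divide[OF sy])
  finally show ?thesis using l2norm_square[OF x] l2norm_square[OF y] by simp
qed

lemma l2_cauchy_schwarz: "x \<in> l2 \<Longrightarrow> y \<in> l2 \<Longrightarrow> cmod (l2inner x y) \<le> l2norm x * l2norm y"
proof -
  assume x: "x \<in> l2" and y: "y \<in> l2"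
  show ?thesis
  proof (cases "l2norm x = 0 \<or> l2norm y = 0")
    case True
    then have "x = (\<lambda>k. 0) \<or> y = (\<lambda>k. 0)" using x y l2norm_eq_0_iff by blast
    then show ?thesis by auto
  next
    case False
    then have p: "l2norm x > 0" "l2norm y > 0"
      using l2norm_nonneg[OF x] l2norm_nonneg[OF y] by auto
    have "cmod (l2inner x y)
        \<le> ((l2norm y / l2norm x) * (l2norm x)\<^sup>2 + (l2norm y)\<^sup>2 / (l2norm y / l2norm x)) / 2"
      using p by (intro l2inner_le_weighted x y) simp
    also have "\<dots> = l2norm x * l2norm y"
      using p by (simp add: power2_eq_square field_simps)
    finally show ?thesis .
  qed
qed

lemma l2norm_triangle: "x \<in> l2 \<Longrightarrow> y \<in> l2 \<Longrightarrow> l2norm (\<lambda>k. x k + y k) \<le> l2norm x + l2norm y"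
proof -
  assume x: "x \<in> l2" and y: "y \<in> l2"
  have "Re (l2inner x y) \<le> l2norm x * l2norm y"
    using complex_Re_le_cmod l2_cauchy_schwarz[OF x y] by (rule order_trans)
  then have "(l2norm (\<lambda>k. x k + y k))\<^sup>2 \<le> (l2norm x + l2norm y)\<^sup>2"
    unfolding l2norm_add_square[OF x y] power2_sum by linarith
  then show ?thesis
    using l2norm_nonneg[OF x] l2norm_nonneg[OF y] by (auto intro: power2_le_imp_le)
qed

lemma l2norm_le_add_diff: "x \<in> l2 \<Longrightarrow> y \<in> l2 \<Longrightarrow> l2norm x \<le> l2norm y + l2norm (\<lambda>k. x k - y k)"
  using l2norm_triangle[of y "\<lambda>k. x k - y k"] by (simp add: l2_diff)

lemma l2_tendsto_norm:
  assumes "\<And>k. s k \<in> l2" "z \<in> l2" "(\<lambda>k. l2norm (\<lambda>i. s k i - z i)) \<longlonglongrightarrow> 0"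
  shows "(\<lambda>k. l2norm (s k)) \<longlonglongrightarrow> l2norm z"
proof -
  have "\<bar>l2norm (s k) - l2norm z\<bar> \<le> l2norm (\<lambda>i. s k i - z i)" for k
    using l2norm_le_add_diff[OF assms(1) assms(2), of k] l2norm_le_add_diff[OF assms(2) assms(1), of k]
      l2norm_diff_commute[of "s k" z] by linarith
  then have "(\<lambda>k. l2norm (s k) - l2norm z) \<longlonglongrightarrow> 0"
    by (intro Lim_null_comparison[OF _ assms(3)]) simp
  then show ?thesis by (simp add: LIM_zero_iff)
qed

lemma l2_tendsto_inner:
  assumes "\<And>k. s k \<in> l2" "z \<in> l2" "(\<lambda>k. l2norm (\<lambda>i. s k i - z i)) \<longlonglongrightarrow> 0" "w \<in> l2"
  shows "(\<lambda>k. l2inner (s k) w) \<longlonglongrightarrow> l2inner z w"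
proof -
  have bound: "norm (l2inner (s k) w - l2inner z w) \<le> l2norm (\<lambda>i. s k i - z i) * l2norm w" for k
  proof -
    have "l2inner (s k) w - l2inner z w = l2inner (\<lambda>i. s k i - z i) w"
      by (rule l2inner_diff_left[symmetric, OF assms(1) assms(2) assms(4)])
    then show ?thesis
      using l2_cauchy_schwarz[OF l2_diff[OF assms(1) assms(2)] assms(4)] by simp
  qed
  have "(\<lambda>k. l2inner (s k) w - l2inner z w) \<longlonglongrightarrow> 0"
    by (rule Lim_null_comparison[OF always_eventually[OF allI[OF bound]]
          tendsto_mult_left_zero[OF assms(3)]])
  then show ?thesis by (simp add: LIM_zero_iff)
qed

lemma l2_tendsto_norm_diff:
  assumes "\<And>k. s k \<in> l2" "v \<in> l2" "x \<in> l2" "(\<lambda>k. l2norm (\<lambda>i. s k i - v i)) \<longlonglongrightarrow> 0"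
  shows "(\<lambda>k. l2norm (\<lambda>i. x i - s k i)) \<longlonglongrightarrow> l2norm (\<lambda>i. x i - v i)"
proof (rule l2_tendsto_norm)
  show "(\<lambda>k. l2norm (\<lambda>i. (x i - s k i) - (x i - v i))) \<longlonglongrightarrow> 0"
    using assms(4) l2norm_diff_commute by simp
qed (use assms in \<open>simp_all add: l2_diff\<close>)

section \<open>Diagonal projections\<close>

definition diag_proj :: "nat set \<Rightarrow> (nat \<Rightarrow> complex) \<Rightarrow> (nat \<Rightarrow> complex)" where
  "diag_proj J x = (\<lambda>k. if k \<in> J then x k else 0)"

lemma l2_diag_proj: "x \<in> l2 \<Longrightarrow> diag_proj J x \<in> l2"
  unfolding l2_def diag_proj_def
  by (auto intro!: summable_comparison_test'[where N=0 and g="\<lambda>k. (cmod (x k))\<^sup>2"])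

lemma diag_range_subset_l2: "diag_range J \<subseteq> l2"
  unfolding diag_range_def by auto

lemma diag_proj_in_diag_range: "x \<in> l2 \<Longrightarrow> diag_proj J x \<in> diag_range J"
  unfolding diag_range_def using l2_diag_proj by (auto simp: diag_proj_def)

lemma diag_proj_id: "y \<in> diag_range J \<Longrightarrow> diag_proj J y = y"
  unfolding diag_proj_def diag_range_def by auto

lemma diag_proj_idem [simp]: "diag_proj J (diag_proj J x) = diag_proj J x"
  unfolding diag_proj_def by auto

lemma diag_proj_diff: "diag_proj J (\<lambda>k. x k - y k) = (\<lambda>k. diag_proj J x k - diag_proj J y k)"
  unfolding diag_proj_def by auto

lemma diag_proj_scale: "diag_proj J (\<lambda>k. c * x k) = (\<lambda>k. c * diag_proj J x k)"
  unfolding diag_proj_def by auto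

lemma l2inner_diag_proj: "l2inner (diag_proj J x) y = l2inner x (diag_proj J y)"
  unfolding l2inner_def diag_proj_def by (rule arg_cong[where f=suminf]) auto

lemma l2norm_diag_proj_pythagoras:
  "x \<in> l2 \<Longrightarrow> (l2norm x)\<^sup>2 = (l2norm (diag_proj J x))\<^sup>2 + (l2norm (diag_proj (-J) x))\<^sup>2"
proof -
  assume x: "x \<in> l2"
  have "(\<Sum>k. (cmod (x k))\<^sup>2) = (\<Sum>k. (cmod (diag_proj J x k))\<^sup>2 + (cmod (diag_proj (-J) x k))\<^sup>2)"
    unfolding diag_proj_def by (rule arg_cong[where f=suminf]) auto
  also have "\<dots> = (\<Sum>k. (cmod (diag_proj J x k))\<^sup>2) + (\<Sum>k. (cmod (diag_proj (-J) x k))\<^sup>2)"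
    using l2_diag_proj[OF x, of J] l2_diag_proj[OF x, of "-J"]
    by (intro suminf_add[symmetric]) (auto simp: l2_def)
  finally show ?thesis
    using l2norm_square[OF x] l2norm_square[OF l2_diag_proj[OF x, of J]]
      l2norm_square[OF l2_diag_proj[OF x, of "-J"]] by simp
qed

lemma l2norm_diag_proj_le: "x \<in> l2 \<Longrightarrow> l2norm (diag_proj J x) \<le> l2norm x"
proof -
  assume x: "x \<in> l2"
  have "(l2norm (diag_proj J x))\<^sup>2 \<le> (l2norm x)\<^sup>2"
    using l2norm_diag_proj_pythagoras[OF x, of J] zero_le_power2[of "l2norm (diag_proj (-J) x)"]
    by linarith
  then show ?thesis
    using l2norm_nonneg[OF x] by (rule power2_le_imp_le)
qed

lemma l2norm_diag_proj_le_iff: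
  assumes "x \<in> l2" "0 \<le> c"
  shows "l2norm (diag_proj J x) \<le> c * l2norm x
    \<longleftrightarrow> (1 - c\<^sup>2) * (l2norm x)\<^sup>2 \<le> (l2norm (diag_proj (-J) x))\<^sup>2"
proof -
  have "l2norm (diag_proj J x) \<le> c * l2norm x \<longleftrightarrow> (l2norm (diag_proj J x))\<^sup>2 \<le> (c * l2norm x)\<^sup>2"
    using assms by (simp add: l2norm_nonneg l2_diag_proj power2_le_iff_abs_le)
  then show ?thesis
    using l2norm_diag_proj_pythagoras[OF assms(1), of J] by (simp add: power_mult_distrib algebra_simps)
qed

lemma l2_tendsto_diag_proj:
  assumes "\<And>k. s k \<in> l2" "z \<in> l2" "(\<lambda>k. l2norm (\<lambda>i. s k i - z i)) \<longlonglongrightarrow> 0"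
  shows "(\<lambda>k. l2norm (\<lambda>i. diag_proj J (s k) i - diag_proj J z i)) \<longlonglongrightarrow> 0"
proof (rule Lim_null_comparison[OF always_eventually assms(3)], rule allI)
  fix k
  have "l2norm (\<lambda>i. diag_proj J (s k) i - diag_proj J z i) \<le> l2norm (\<lambda>i. s k i - z i)"
    unfolding diag_proj_diff[symmetric] by (rule l2norm_diag_proj_le[OF l2_diff[OF assms(1,2)]])
  then show "norm (l2norm (\<lambda>i. diag_proj J (s k) i - diag_proj J z i)) \<le> l2norm (\<lambda>i. s k i - z i)"
    using l2norm_nonneg[OF l2_diff[OF l2_diag_proj[OF assms(1)] l2_diag_proj[OF assms(2)]]] by simp
qed

lemma Hn_eq_diag_range: "Hn n = diag_range {..<n}"
  unfolding Hn_def diag_range_def by auto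

lemma diag_proj_Hn: "x \<in> Hn n \<Longrightarrow> diag_proj J x = diag_proj (J \<inter> {..<n}) x"
  unfolding Hn_def diag_proj_def by (auto simp: not_less)

lemma l2norm_diag_proj_tail: "x \<in> l2 \<Longrightarrow> (\<lambda>n. l2norm (diag_proj (-{..<n}) x)) \<longlonglongrightarrow> 0"
proof -
  assume x: "x \<in> l2"
  have head: "(l2norm (diag_proj {..<n} x))\<^sup>2 = (\<Sum>k<n. (cmod (x k))\<^sup>2)" for n
  proof -
    have "(l2norm (diag_proj {..<n} x))\<^sup>2 = (\<Sum>k. (cmod (diag_proj {..<n} x k))\<^sup>2)"
      by (rule l2norm_square[OF l2_diag_proj[OF x]])
    also have "\<dots> = (\<Sum>k<n. (cmod (diag_proj {..<n} x k))\<^sup>2)"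
      by (rule suminf_finite) (auto simp: diag_proj_def)
    finally show ?thesis by (simp add: diag_proj_def)
  qed
  have tail: "(l2norm (diag_proj (-{..<n}) x))\<^sup>2 = (l2norm x)\<^sup>2 - (\<Sum>k<n. (cmod (x k))\<^sup>2)" for n
    using l2norm_diag_proj_pythagoras[OF x, of "{..<n}"] head[of n] by simp
  have "(\<lambda>n. (l2norm x)\<^sup>2 - (\<Sum>k<n. (cmod (x k))\<^sup>2)) \<longlonglongrightarrow> (l2norm x)\<^sup>2 - (l2norm x)\<^sup>2"
    using x unfolding l2norm_square[OF x] l2_def
    by (intro tendsto_diff tendsto_const summable_LIMSEQ) simp
  then have "(\<lambda>n. (l2norm (diag_proj (-{..<n}) x))\<^sup>2) \<longlonglongrightarrow> 0"
    unfolding tail by simp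
  then have "(\<lambda>n. sqrt ((l2norm (diag_proj (-{..<n}) x))\<^sup>2)) \<longlonglongrightarrow> sqrt 0"
    by (intro tendsto_real_sqrt)
  then show ?thesis
    using x by (simp add: l2norm_nonneg l2_diag_proj)
qed


lemma closed_subspace_subset_l2: "closed_subspace S \<Longrightarrow> S \<subseteq> l2"
  unfolding closed_subspace_def by blast

lemma closed_subspace_zero: "closed_subspace S \<Longrightarrow> (\<lambda>k. 0) \<in> S"
  unfolding closed_subspace_def by blast

lemma closed_subspace_add: "closed_subspace S \<Longrightarrow> x \<in> S \<Longrightarrow> y \<in> S \<Longrightarrow> (\<lambda>k. x k + y k) \<in> S"
  unfolding closed_subspace_def by blast

lemma closed_subspace_scale: "closed_subspace S \<Longrightarrow> x \<in> S \<Longrightarrow> (\<lambda>k. c * x k) \<in> S"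
  unfolding closed_subspace_def by blast

lemma closed_subspace_diff: "closed_subspace S \<Longrightarrow> x \<in> S \<Longrightarrow> y \<in> S \<Longrightarrow> (\<lambda>k. x k - y k) \<in> S"
  using closed_subspace_add[of S x "\<lambda>k. (-1) * y k"] closed_subspace_scale[of S y "-1"] by simp

lemma closed_subspace_limit:
  assumes "closed_subspace S" "\<And>k. s k \<in> S" "z \<in> l2" "(\<lambda>k. l2norm (\<lambda>i. s k i - z i)) \<longlonglongrightarrow> 0"
  shows "z \<in> S"
  using assms unfolding closed_subspace_def by blast

lemma closed_subspace_Int: "closed_subspace A \<Longrightarrow> closed_subspace B \<Longrightarrow> closed_subspace (A \<inter> B)"
  unfolding closed_subspace_def by blast

lemma closed_subspace_diag_range: "closed_subspace (diag_range J)"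
proof -
  have limit: "z \<in> diag_range J"
    if s: "\<forall>k. s k \<in> diag_range J" and z: "z \<in> l2"
      and lim: "(\<lambda>k. l2norm (\<lambda>i. s k i - z i)) \<longlonglongrightarrow> 0" for s z
  proof -
    have "z i = 0" if "i \<notin> J" for i
    proof -
      have "cmod (z i) \<le> l2norm (\<lambda>i. s k i - z i)" for k
      proof -
        have sk: "s k \<in> l2" "s k i = 0"
          using s \<open>i \<notin> J\<close> unfolding diag_range_def by auto
        have "cmod (s k i - z i) \<le> l2norm (\<lambda>i. s k i - z i)"
          by (rule l2_coord_le_norm[OF l2_diff[OF sk(1) z]])
        then show ?thesis using sk(2) by simp
      qed
      then have "cmod (z i) \<le> 0"
        by (intro LIMSEQ_le_const[OF lim]) auto
      then show ?thesis by simp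
    qed
    then show ?thesis using z unfolding diag_range_def by blast
  qed
  have "(\<lambda>k. 0) \<in> diag_range J"
    unfolding diag_range_def using l2_finite_support[of 0] by auto
  moreover have "\<forall>x\<in>diag_range J. \<forall>y\<in>diag_range J. (\<lambda>k. x k + y k) \<in> diag_range J"
    unfolding diag_range_def using l2_add by auto
  moreover have "\<forall>x\<in>diag_range J. \<forall>c. (\<lambda>k. c * x k) \<in> diag_range J"
    unfolding diag_range_def using l2_scale by auto
  ultimately show ?thesis
    unfolding closed_subspace_def using diag_range_subset_l2 limit by blast
qed

lemma closed_subspace_Int_Hn: "closed_subspace S \<Longrightarrow> closed_subspace (S \<inter> Hn n)"
  unfolding Hn_eq_diag_range by (intro closed_subspace_Int closed_subspace_diag_range)

lemma ominus_subset_l2: "T \<subseteq> l2 \<Longrightarrow> ominus T W \<subseteq> l2"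
  unfolding ominus_def by blast

lemma ominus_scale:
  assumes T: "closed_subspace T" and W: "W \<subseteq> l2" and \<xi>: "\<xi> \<in> ominus T W"
  shows "(\<lambda>k. c * \<xi> k) \<in> ominus T W"
  unfolding ominus_def
proof (intro CollectI conjI ballI)
  have "\<xi> \<in> T" using \<xi> unfolding ominus_def by blast
  with T show "(\<lambda>k. c * \<xi> k) \<in> T" by (rule closed_subspace_scale)
  fix \<eta> assume "\<eta> \<in> W"
  have "l2inner (\<lambda>k. c * \<xi> k) \<eta> = c * l2inner \<xi> \<eta>"
    using \<open>\<xi> \<in> T\<close> \<open>\<eta> \<in> W\<close> W closed_subspace_subset_l2[OF T] by (intro l2inner_scale_left) auto
  also have "l2inner \<xi> \<eta> = 0" using \<xi> \<open>\<eta> \<in> W\<close> unfolding ominus_def by blast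
  finally show "l2inner (\<lambda>k. c * \<xi> k) \<eta> = 0" by simp
qed

lemma ominus_normalize:
  assumes T: "closed_subspace T" and W: "W \<subseteq> l2" and \<xi>: "\<xi> \<in> ominus T W" "l2norm \<xi> \<noteq> 0"
  defines "\<zeta> \<equiv> (\<lambda>k. of_real (1 / l2norm \<xi>) * \<xi> k)"
  shows "\<zeta> \<in> ominus T W" "l2norm \<zeta> = 1"
    "l2norm (diag_proj J \<zeta>) = l2norm (diag_proj J \<xi>) / l2norm \<xi>"
proof -
  have x: "\<xi> \<in> l2" using \<xi>(1) ominus_subset_l2[OF closed_subspace_subset_l2[OF T]] by blast
  have pos: "l2norm \<xi> > 0" using \<xi>(2) l2norm_nonneg[OF x] by simp
  show "\<zeta> \<in> ominus T W" unfolding \<zeta>_def by (rule ominus_scale[OF T W \<xi>(1)])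
  show "l2norm \<zeta> = 1"
    unfolding \<zeta>_def l2norm_scale[OF x] using pos by (simp add: norm_divide)
  show "l2norm (diag_proj J \<zeta>) = l2norm (diag_proj J \<xi>) / l2norm \<xi>"
    unfolding \<zeta>_def diag_proj_scale l2norm_scale[OF l2_diag_proj[OF x]] using pos
    by (simp add: norm_divide)
qed

lemma ominus_limit:
  assumes T: "closed_subspace T" and W: "W \<subseteq> l2" and s: "\<And>k. s k \<in> ominus T W"
    and z: "z \<in> l2" and lim: "(\<lambda>k. l2norm (\<lambda>i. s k i - z i)) \<longlonglongrightarrow> 0"
  shows "z \<in> ominus T W"
proof -
  have sT: "s k \<in> T" for k using s unfolding ominus_def by blast
  have sl: "s k \<in> l2" for k using sT closed_subspace_subset_l2[OF T] by blast
  have "l2inner z \<eta> = 0" if "\<eta> \<in> W" for \<eta>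
  proof -
    have "(\<lambda>k. l2inner (s k) \<eta>) \<longlonglongrightarrow> l2inner z \<eta>"
      using that W by (intro l2_tendsto_inner[OF sl z lim]) blast
    moreover have "(\<lambda>k. l2inner (s k) \<eta>) = (\<lambda>k. 0)"
      using s that unfolding ominus_def by auto
    ultimately show ?thesis using LIMSEQ_unique tendsto_const by metis
  qed
  moreover have "z \<in> T" by (rule closed_subspace_limit[OF T sT z lim])
  ultimately show ?thesis unfolding ominus_def by blast
qed

section \<open>Compactness of bounded sets in H_n\<close>

lemma bounded_seq_coords_convergent_subseq:
  fixes f :: "nat \<Rightarrow> nat \<Rightarrow> complex"
  assumes "\<And>k i. cmod (f k i) \<le> B"
  shows "\<exists>r. strict_mono r \<and> (\<forall>i<m. convergent (\<lambda>k. f (r k) i))"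
proof (induction m)
  case 0
  show ?case by (rule exI[of _ id]) (simp add: strict_mono_def)
next
  case (Suc m)
  then obtain r where r: "strict_mono r" "\<forall>i<m. convergent (\<lambda>k. f (r k) i)" by blast
  have "bounded (range (\<lambda>k. f (r k) m))" using assms by (intro boundedI[where B=B]) auto
  then obtain l s where s: "strict_mono s" "((\<lambda>k. f (r k) m) \<circ> s) \<longlonglongrightarrow> l"
    using bounded_imp_convergent_subsequence by blast
  show ?case
  proof (rule exI[of _ "r \<circ> s"], intro conjI allI impI)
    show "strict_mono (r \<circ> s)" using r(1) s(1) by (rule strict_mono_o)
    fix i assume "i < Suc m"
    then consider "i < m" | "i = m" by linarith
    then show "convergent (\<lambda>k. f ((r \<circ> s) k) i)"
    proof cases
      case 1
      then have "convergent ((\<lambda>k. f (r k) i) \<circ> s)"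
        using r(2) s(1) convergent_subseq_convergent by blast
      then show ?thesis by (simp add: o_def)
    next
      case 2
      then show ?thesis using s(2) by (auto simp: convergent_def o_def)
    qed
  qed
qed

lemma Hn_bounded_seq_convergent_subseq:
  fixes x :: "nat \<Rightarrow> nat \<Rightarrow> complex"
  assumes x: "\<And>k. x k \<in> Hn n" and B: "\<And>k. l2norm (x k) \<le> B"
  obtains r z where "strict_mono r" "z \<in> Hn n" "(\<lambda>k. l2norm (\<lambda>i. x (r k) i - z i)) \<longlonglongrightarrow> 0"
proof -
  have "cmod (x k i) \<le> B" for k i
  proof -
    have "x k \<in> l2" using x[of k] unfolding Hn_def by blast
    then show ?thesis using l2_coord_le_norm[of "x k" i] B[of k] by linarith
  qed
  then obtain r where r: "strict_mono r" "\<forall>i<n. convergent (\<lambda>k. x (r k) i)"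
    using bounded_seq_coords_convergent_subseq[of x B n] by blast
  define z where "z = (\<lambda>i. if i < n then lim (\<lambda>k. x (r k) i) else 0)"
  have z: "z \<in> Hn n" unfolding Hn_def z_def using l2_finite_support[of n] by auto
  have coords: "(\<lambda>k. (cmod (x (r k) i - z i))\<^sup>2) \<longlonglongrightarrow> 0" if "i < n" for i
  proof -
    have "(\<lambda>k. x (r k) i) \<longlonglongrightarrow> z i"
      using r(2) that unfolding z_def by (simp add: convergent_LIMSEQ_iff)
    then have "(\<lambda>k. x (r k) i - z i) \<longlonglongrightarrow> 0"
      by (rule LIM_zero)
    then have "(\<lambda>k. cmod (x (r k) i - z i)) \<longlonglongrightarrow> 0"
      by (rule tendsto_norm_zero)
    then have "(\<lambda>k. (cmod (x (r k) i - z i))\<^sup>2) \<longlonglongrightarrow> 0\<^sup>2"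
      by (rule tendsto_power)
    then show ?thesis by simp
  qed
  have dist: "l2norm (\<lambda>i. x (r k) i - z i) = sqrt (\<Sum>i<n. (cmod (x (r k) i - z i))\<^sup>2)" for k
  proof -
    have "\<forall>i\<ge>n. x (r k) i - z i = 0"
      using x[of "r k"] unfolding Hn_def z_def by auto
    then have "(\<Sum>i. (cmod (x (r k) i - z i))\<^sup>2) = (\<Sum>i<n. (cmod (x (r k) i - z i))\<^sup>2)"
      by (intro suminf_finite) auto
    then show ?thesis unfolding l2norm_def by simp
  qed
  have "(\<lambda>k. \<Sum>i<n. (cmod (x (r k) i - z i))\<^sup>2) \<longlonglongrightarrow> (\<Sum>i<n. 0)"
    by (rule tendsto_sum) (rule coords, simp)
  then have "(\<lambda>k. sqrt (\<Sum>i<n. (cmod (x (r k) i - z i))\<^sup>2)) \<longlonglongrightarrow> sqrt (\<Sum>i<n. 0)"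
    by (rule tendsto_real_sqrt)
  then have "(\<lambda>k. l2norm (\<lambda>i. x (r k) i - z i)) \<longlonglongrightarrow> 0"
    by (simp add: dist)
  with r(1) z that show ?thesis by blast
qed


section \<open>The diagonal cosine\<close>

lemma l2inner_le_diag_proj_norm:
  assumes "\<xi> \<in> l2" "\<eta> \<in> diag_range J" "l2norm \<eta> = 1"
  shows "cmod (l2inner \<xi> \<eta>) \<le> l2norm (diag_proj J \<xi>)"
proof -
  have "l2inner \<xi> \<eta> = l2inner (diag_proj J \<xi>) \<eta>"
    using diag_proj_id[OF assms(2)] by (simp add: l2inner_diag_proj)
  then show ?thesis
    using l2_cauchy_schwarz[OF l2_diag_proj[OF assms(1)] diag_range_subset_l2[THEN subsetD, OF assms(2)]]
      assms(3) by simp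
qed

lemma diag_proj_norm_attained:
  assumes T: "T \<subseteq> l2" and \<xi>: "\<xi> \<in> ominus T (T \<inter> diag_range J)" and r: "l2norm (diag_proj J \<xi>) \<noteq> 0"
  shows "\<exists>\<eta>\<in>ominus (diag_range J) (T \<inter> diag_range J).
    l2norm \<eta> = 1 \<and> cmod (l2inner \<xi> \<eta>) = l2norm (diag_proj J \<xi>)"
proof -
  define r where "r = l2norm (diag_proj J \<xi>)"
  define \<eta> where "\<eta> = (\<lambda>k. of_real (1 / r) * diag_proj J \<xi> k)"
  have x: "\<xi> \<in> l2" using \<xi> ominus_subset_l2[OF T] by blast
  have p: "diag_proj J \<xi> \<in> l2" by (rule l2_diag_proj[OF x])
  have rpos: "r > 0" using r l2norm_nonneg[OF p] unfolding r_def by simp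
  have "\<eta> \<in> diag_range J"
    using diag_proj_in_diag_range[OF l2_scale[OF x, of "of_real (1 / r)"], of J]
    unfolding \<eta>_def diag_proj_scale .
  moreover have "l2inner \<eta> w = 0" if w: "w \<in> T \<inter> diag_range J" for w
  proof -
    have "l2inner \<eta> w = of_real (1 / r) * l2inner (diag_proj J \<xi>) w"
      unfolding \<eta>_def using w T by (intro l2inner_scale_left[OF p]) auto
    also have "l2inner (diag_proj J \<xi>) w = l2inner \<xi> w"
      using diag_proj_id[of w J] w by (simp add: l2inner_diag_proj)
    also have "\<dots> = 0" using \<xi> w unfolding ominus_def by blast
    finally show ?thesis by simp
  qed
  moreover have "l2norm \<eta> = 1"
    unfolding \<eta>_def l2norm_scale[OF p] using rpos unfolding r_def by (simp add: norm_divide)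
  moreover have "l2inner \<xi> \<eta> = of_real r"
  proof -
    have "l2inner \<xi> (diag_proj J \<xi>) = l2inner (diag_proj J \<xi>) (diag_proj J \<xi>)"
      using l2inner_diag_proj[of J \<xi> "diag_proj J \<xi>"] by simp
    then show ?thesis
      unfolding \<eta>_def l2inner_scale_right[OF p x] l2inner_self[OF p] r_def[symmetric]
      using rpos by (simp add: power2_eq_square)
  qed
  ultimately show ?thesis
    using rpos unfolding ominus_def r_def by (intro bexI[of _ \<eta>]) auto
qed

lemma bdd_above_friedrichs_cos_diag_range:
  assumes T: "T \<subseteq> l2"
  shows "bdd_above (insert 0 {cmod (l2inner \<xi> \<eta>) | \<xi> \<eta>. \<xi> \<in> ominus T (T \<inter> diag_range J)
    \<and> \<eta> \<in> ominus (diag_range J) (T \<inter> diag_range J) \<and> l2norm \<xi> = 1 \<and> l2norm \<eta> = 1})"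
proof (rule bdd_aboveI[where M=1], safe)
  fix \<xi> \<eta> assume \<xi>: "\<xi> \<in> ominus T (T \<inter> diag_range J)" and \<eta>: "\<eta> \<in> ominus (diag_range J) (T \<inter> diag_range J)"
    and unit: "l2norm \<xi> = 1" "l2norm \<eta> = 1"
  have x: "\<xi> \<in> l2" using \<xi> ominus_subset_l2[OF T] by blast
  have "cmod (l2inner \<xi> \<eta>) \<le> l2norm (diag_proj J \<xi>)"
    using \<eta> unit(2) unfolding ominus_def by (intro l2inner_le_diag_proj_norm[OF x]) auto
  also have "\<dots> \<le> 1" using l2norm_diag_proj_le[OF x, of J] unit(1) by simp
  finally show "cmod (l2inner \<xi> \<eta>) \<le> 1" .
qed simp

lemma friedrichs_cos_diag_range_nonneg: "T \<subseteq> l2 \<Longrightarrow> 0 \<le> friedrichs_cos T (diag_range J)"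
  unfolding friedrichs_cos_def by (rule cSup_upper[OF insertI1 bdd_above_friedrichs_cos_diag_range])

lemma friedrichs_cos_diag_range_le_iff:
  assumes T: "T \<subseteq> l2" and c: "0 \<le> c"
  shows "friedrichs_cos T (diag_range J) \<le> c
    \<longleftrightarrow> (\<forall>\<xi>\<in>ominus T (T \<inter> diag_range J). l2norm \<xi> = 1 \<longrightarrow> l2norm (diag_proj J \<xi>) \<le> c)"
proof -
  define A where "A = {cmod (l2inner \<xi> \<eta>) | \<xi> \<eta>. \<xi> \<in> ominus T (T \<inter> diag_range J)
    \<and> \<eta> \<in> ominus (diag_range J) (T \<inter> diag_range J) \<and> l2norm \<xi> = 1 \<and> l2norm \<eta> = 1}"
  have A_le: "\<exists>\<xi>\<in>ominus T (T \<inter> diag_range J). l2norm \<xi> = 1 \<and> a \<le> l2norm (diag_proj J \<xi>)"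
    if "a \<in> A" for a
    using that l2inner_le_diag_proj_norm ominus_subset_l2[OF T]
    unfolding A_def ominus_def by blast
  have "bdd_above (insert 0 A)"
    unfolding A_def by (rule bdd_above_friedrichs_cos_diag_range[OF T])
  then have "friedrichs_cos T (diag_range J) \<le> c \<longleftrightarrow> (\<forall>a\<in>A. a \<le> c)"
    unfolding friedrichs_cos_def A_def[symmetric] using c by (simp add: cSup_le_iff)
  also have "\<dots> \<longleftrightarrow>
      (\<forall>\<xi>\<in>ominus T (T \<inter> diag_range J). l2norm \<xi> = 1 \<longrightarrow> l2norm (diag_proj J \<xi>) \<le> c)"
  proof
    assume bound: "\<forall>a\<in>A. a \<le> c"
    show "\<forall>\<xi>\<in>ominus T (T \<inter> diag_range J). l2norm \<xi> = 1 \<longrightarrow> l2norm (diag_proj J \<xi>) \<le> c"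
    proof (intro ballI impI)
      fix \<xi> assume \<xi>: "\<xi> \<in> ominus T (T \<inter> diag_range J)" "l2norm \<xi> = 1"
      show "l2norm (diag_proj J \<xi>) \<le> c"
      proof (cases "l2norm (diag_proj J \<xi>) = 0")
        case False
        then obtain \<eta> where "\<eta> \<in> ominus (diag_range J) (T \<inter> diag_range J)" "l2norm \<eta> = 1"
          "cmod (l2inner \<xi> \<eta>) = l2norm (diag_proj J \<xi>)"
          using diag_proj_norm_attained[OF T \<xi>(1)] by blast
        then have "l2norm (diag_proj J \<xi>) \<in> A"
          unfolding A_def using \<xi> by force
        then show ?thesis using bound by blast
      qed (use c in simp)
    qed
  next
    assume "\<forall>\<xi>\<in>ominus T (T \<inter> diag_range J). l2norm \<xi> = 1 \<longrightarrow> l2norm (diag_proj J \<xi>) \<le> c"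
    then show "\<forall>a\<in>A. a \<le> c" using A_le by fastforce
  qed
  finally show ?thesis .
qed

definition diag_cos_bound :: "(nat \<Rightarrow> complex) set \<Rightarrow> real \<Rightarrow> bool" where
  "diag_cos_bound T c \<longleftrightarrow>
    (\<forall>J. \<forall>\<xi>\<in>ominus T (T \<inter> diag_range J). l2norm (diag_proj J \<xi>) \<le> c * l2norm \<xi>)"

lemma friedrichs_cos_diag_range_le_iff_homogeneous:
  assumes T: "closed_subspace T" and c: "0 \<le> c"
  shows "friedrichs_cos T (diag_range J) \<le> c
    \<longleftrightarrow> (\<forall>\<xi>\<in>ominus T (T \<inter> diag_range J). l2norm (diag_proj J \<xi>) \<le> c * l2norm \<xi>)"
  unfolding friedrichs_cos_diag_range_le_iff[OF closed_subspace_subset_l2[OF T] c]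
proof (intro iffI ballI)
  fix \<xi> assume unit: "\<forall>\<xi>\<in>ominus T (T \<inter> diag_range J). l2norm \<xi> = 1 \<longrightarrow> l2norm (diag_proj J \<xi>) \<le> c"
    and \<xi>: "\<xi> \<in> ominus T (T \<inter> diag_range J)"
  have W: "T \<inter> diag_range J \<subseteq> l2" using diag_range_subset_l2 by blast
  have x: "\<xi> \<in> l2" using \<xi> ominus_subset_l2[OF closed_subspace_subset_l2[OF T]] by blast
  show "l2norm (diag_proj J \<xi>) \<le> c * l2norm \<xi>"
  proof (cases "l2norm \<xi> = 0")
    case True
    then show ?thesis using x by (simp add: l2norm_eq_0_iff diag_proj_def)
  next
    case False
    then have "l2norm (diag_proj J \<xi>) / l2norm \<xi> \<le> c"
      using unit ominus_normalize[OF T W \<xi> False] by metis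
    then show ?thesis using False l2norm_nonneg[OF x] by (simp add: field_simps)
  qed
qed auto

lemma friedrichs_cos_diag_range_le_1: "T \<subseteq> l2 \<Longrightarrow> friedrichs_cos T (diag_range J) \<le> 1"
  by (auto simp: friedrichs_cos_diag_range_le_iff intro: order_trans[OF l2norm_diag_proj_le]
      dest: ominus_subset_l2[THEN subsetD])

lemma bdd_above_friedrichs_cos_range:
  "T \<subseteq> l2 \<Longrightarrow> bdd_above (range (\<lambda>J. friedrichs_cos T (diag_range J)))"
  using friedrichs_cos_diag_range_le_1 by (intro bdd_aboveI[where M=1]) blast

lemma cos_D_nonneg: "T \<subseteq> l2 \<Longrightarrow> 0 \<le> cos_D T"
proof -
  assume T: "T \<subseteq> l2"
  have "friedrichs_cos T (diag_range {}) \<le> cos_D T"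
    unfolding cos_D_def by (rule cSUP_upper[OF UNIV_I bdd_above_friedrichs_cos_range[OF T]])
  then show ?thesis using friedrichs_cos_diag_range_nonneg[OF T, of "{}"] by linarith
qed

lemma cos_D_le_iff:
  assumes T: "closed_subspace T" and c: "0 \<le> c"
  shows "cos_D T \<le> c \<longleftrightarrow> diag_cos_bound T c"
  unfolding cos_D_def diag_cos_bound_def friedrichs_cos_diag_range_le_iff_homogeneous[OF T c, symmetric]
  using bdd_above_friedrichs_cos_range[OF closed_subspace_subset_l2[OF T]] by (simp add: cSUP_le_iff)

lemma K_D_le_iff:
  assumes "T \<subseteq> l2" "cos_D T < 1" "M > 0"
  shows "K_D T \<le> M \<longleftrightarrow> cos_D T \<le> sqrt (1 - 1 / M\<^sup>2)"
proof -
  have le_sqrt: "x \<le> sqrt y \<longleftrightarrow> x\<^sup>2 \<le> y" if "0 \<le> x" for x y :: real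
    using real_le_rsqrt sqrt_ge_absD that by (metis abs_of_nonneg)
  define a where "a = cos_D T"
  have a: "0 \<le> a" "a < 1" using cos_D_nonneg[OF assms(1)] assms(2) unfolding a_def by auto
  then have pos: "0 < 1 - a\<^sup>2" by (simp add: power_less_one_iff abs_less_iff)
  have "K_D T \<le> M \<longleftrightarrow> 1 / M \<le> sqrt (1 - a\<^sup>2)"
    unfolding K_D_def a_def[symmetric] using pos assms(3) by (simp add: field_simps)
  also have "\<dots> \<longleftrightarrow> 1 / M\<^sup>2 \<le> 1 - a\<^sup>2"
    using assms(3) by (simp add: le_sqrt power_divide)
  also have "\<dots> \<longleftrightarrow> a \<le> sqrt (1 - 1 / M\<^sup>2)"
    using a by (simp add: le_sqrt) linarith
  finally show ?thesis unfolding a_def .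
qed

section \<open>Orthogonal projections onto subspaces of H_n\<close>

lemma nearest_point_orthogonal:
  assumes V: "closed_subspace V" and v: "v \<in> V" and x: "x \<in> l2" and w: "w \<in> V"
    and nearest: "\<And>w. w \<in> V \<Longrightarrow> l2norm (\<lambda>k. x k - v k) \<le> l2norm (\<lambda>k. x k - w k)"
  shows "l2inner (\<lambda>k. x k - v k) w = 0"
proof -
  define u where "u = (\<lambda>k. x k - v k)"
  define a where "a = l2inner u w"
  define N where "N = (l2norm w)\<^sup>2"
  define t where "t = 1 / (N + 1)"
  have vl: "v \<in> l2" and wl: "w \<in> l2" using v w closed_subspace_subset_l2[OF V] by auto
  have ul: "u \<in> l2" unfolding u_def using x vl by (rule l2_diff)
  have N: "0 \<le> N" unfolding N_def by simp
  then have t: "t > 0" unfolding t_def by simp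
  have tw: "(\<lambda>k. (of_real t * a) * w k) \<in> l2" using wl by (rule l2_scale)
  text \<open>Moving from v towards w by the step t a does not decrease the distance to x.\<close>
  have "(\<lambda>k. v k + (of_real t * a) * w k) \<in> V"
    using V v w by (intro closed_subspace_add closed_subspace_scale)
  then have "l2norm u \<le> l2norm (\<lambda>k. u k - (of_real t * a) * w k)"
    using nearest unfolding u_def by (force simp: algebra_simps)
  then have "(l2norm u)\<^sup>2 \<le> (l2norm (\<lambda>k. u k - (of_real t * a) * w k))\<^sup>2"
    using l2norm_nonneg[OF ul] by (simp add: power_mono)
  also have "\<dots> = (l2norm u)\<^sup>2 - 2 * (t * (cmod a)\<^sup>2) + t\<^sup>2 * (cmod a)\<^sup>2 * N"
  proof -
    have "Re (cnj (of_real t * a) * a) = t * (cmod a)\<^sup>2"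
      by (simp add: mult.assoc complex_norm_square[symmetric] mult.commute[of "cnj a"])
    then show ?thesis
      unfolding l2norm_diff_square[OF ul tw] l2inner_scale_right[OF wl ul] a_def[symmetric]
        l2norm_scale[OF wl] N_def using t by (simp add: norm_mult power_mult_distrib)
  qed
  finally have "2 * (cmod a)\<^sup>2 \<le> (cmod a)\<^sup>2 * (t * N)"
    using t by (simp add: power2_eq_square algebra_simps)
  also have "\<dots> \<le> (cmod a)\<^sup>2 * 1"
    unfolding t_def using N by (intro mult_left_mono) auto
  finally show ?thesis unfolding a_def u_def by simp
qed

lemma nearest_point_exists:
  assumes V: "closed_subspace V" "V \<subseteq> Hn n" and x: "x \<in> l2"
  shows "\<exists>v\<in>V. \<forall>w\<in>V. l2norm (\<lambda>k. x k - v k) \<le> l2norm (\<lambda>k. x k - w k)"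
proof -
  have Vl: "V \<subseteq> l2" by (rule closed_subspace_subset_l2[OF V(1)])
  define D where "D = (\<lambda>v. l2norm (\<lambda>k. x k - v k)) ` V"
  define d where "d = Inf D"
  have D: "D \<noteq> {}" "bdd_below D"
    unfolding D_def using closed_subspace_zero[OF V(1)] Vl x
    by (auto intro!: bdd_belowI[where m=0] l2norm_nonneg l2_diff)
  have lower: "d \<le> l2norm (\<lambda>k. x k - w k)" if "w \<in> V" for w
    unfolding d_def using that D(2) unfolding D_def by (intro cInf_lower) auto
  have "\<exists>v\<in>V. l2norm (\<lambda>i. x i - v i) < d + inverse (real (Suc k))" for k
    using cInf_less_iff[OF D, of "d + inverse (real (Suc k))"] unfolding d_def D_def by auto
  then obtain s where s: "\<And>k. s k \<in> V" "\<And>k. l2norm (\<lambda>i. x i - s k i) < d + inverse (real (Suc k))"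
    by metis
  have sl: "s k \<in> l2" for k using s(1) Vl by blast
  have s_lim: "(\<lambda>k. l2norm (\<lambda>i. x i - s k i)) \<longlonglongrightarrow> d"
  proof (rule real_tendsto_sandwich[OF _ _ tendsto_const])
    show "\<forall>\<^sub>F k in sequentially. d \<le> l2norm (\<lambda>i. x i - s k i)" using lower s(1) by simp
    show "\<forall>\<^sub>F k in sequentially. l2norm (\<lambda>i. x i - s k i) \<le> d + inverse (real (Suc k))"
      using s(2) by (simp add: less_imp_le)
    show "(\<lambda>k. d + inverse (real (Suc k))) \<longlonglongrightarrow> d"
      using tendsto_add[OF tendsto_const LIMSEQ_inverse_real_of_nat] by simp
  qed
  have "s k \<in> Hn n" for k using s(1) V(2) by blast
  moreover have "l2norm (s k) \<le> l2norm x + (d + 1)" for k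
  proof -
    have "l2norm (s k) \<le> l2norm x + l2norm (\<lambda>i. x i - s k i)"
      using l2norm_le_add_diff[OF sl[of k] x] l2norm_diff_commute[of "s k" x] by simp
    also have "l2norm (\<lambda>i. x i - s k i) \<le> d + 1"
      using s(2)[of k] inverse_le_1_iff[of "real (Suc k)"] by simp
    finally show ?thesis by simp
  qed
  ultimately obtain r v where r: "strict_mono r" "v \<in> Hn n" "(\<lambda>k. l2norm (\<lambda>i. s (r k) i - v i)) \<longlonglongrightarrow> 0"
    by (rule Hn_bounded_seq_convergent_subseq)
  have vl: "v \<in> l2" using r(2) unfolding Hn_def by blast
  have vV: "v \<in> V" using closed_subspace_limit[OF V(1) s(1) vl r(3)] .
  have "(\<lambda>k. l2norm (\<lambda>i. x i - s (r k) i)) \<longlonglongrightarrow> l2norm (\<lambda>i. x i - v i)"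
    by (rule l2_tendsto_norm_diff[OF sl vl x r(3)])
  moreover have "(\<lambda>k. l2norm (\<lambda>i. x i - s (r k) i)) \<longlonglongrightarrow> d"
    using LIMSEQ_subseq_LIMSEQ[OF s_lim r(1)] by (simp add: o_def)
  ultimately have "l2norm (\<lambda>i. x i - v i) = d" by (rule LIMSEQ_unique)
  then show ?thesis using vV lower by auto
qed

lemma orthogonal_projection_exists:
  assumes "closed_subspace V" "V \<subseteq> Hn n" "x \<in> l2"
  shows "\<exists>v\<in>V. \<forall>w\<in>V. l2inner (\<lambda>k. x k - v k) w = 0"
  using nearest_point_exists[OF assms] nearest_point_orthogonal[OF assms(1) _ assms(3)] by metis

section \<open>Finite sections\<close>

lemma Int_diag_range_Hn:
  "T \<subseteq> Hn n \<Longrightarrow> T \<inter> diag_range J = T \<inter> diag_range (J \<inter> {..<n})"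
  unfolding Hn_def diag_range_def by (auto simp: not_less)

lemma Int_Hn_Int_diag_range: "S \<inter> Hn n \<inter> diag_range J = S \<inter> diag_range (J \<inter> {..<n})"
  unfolding Hn_eq_diag_range diag_range_def by auto

text \<open>The finite-dimensional core: by compactness of the unit sphere of T, a unit vector
  of T orthogonal to T \<inter> D_K cannot lie arbitrarily close to D_K.\<close>

lemma unit_ominus_diag_proj_compl_not_tendsto_0:
  assumes T: "closed_subspace T" "T \<subseteq> Hn n"
    and \<zeta>: "\<And>k. \<zeta> k \<in> ominus T (T \<inter> diag_range K)" "\<And>k. l2norm (\<zeta> k) = 1"
    and small: "(\<lambda>k. l2norm (diag_proj (-K) (\<zeta> k))) \<longlonglongrightarrow> 0"
  shows False
proof -
  have W: "T \<inter> diag_range K \<subseteq> l2" using diag_range_subset_l2 by blast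
  have \<zeta>T: "\<zeta> k \<in> T" for k using \<zeta>(1) unfolding ominus_def by blast
  have \<zeta>l: "\<zeta> k \<in> l2" for k using \<zeta>T closed_subspace_subset_l2[OF T(1)] by blast
  have \<zeta>H: "\<zeta> k \<in> Hn n" for k using \<zeta>T T(2) by blast
  have \<zeta>B: "l2norm (\<zeta> k) \<le> 1" for k using \<zeta>(2) by simp
  obtain r z where r: "strict_mono r" "z \<in> Hn n"
    and lim: "(\<lambda>k. l2norm (\<lambda>i. \<zeta> (r k) i - z i)) \<longlonglongrightarrow> 0"
    by (rule Hn_bounded_seq_convergent_subseq[OF \<zeta>H \<zeta>B])
  have zl: "z \<in> l2" using r(2) unfolding Hn_def by blast
  have z: "z \<in> ominus T (T \<inter> diag_range K)" by (rule ominus_limit[OF T(1) W \<zeta>(1) zl lim])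
  have "(\<lambda>k. l2norm (\<zeta> (r k))) \<longlonglongrightarrow> l2norm z" by (rule l2_tendsto_norm[OF \<zeta>l zl lim])
  moreover have "(\<lambda>k. l2norm (\<zeta> (r k))) \<longlonglongrightarrow> 1" using \<zeta>(2) by simp
  ultimately have z_unit: "l2norm z = 1" by (rule LIMSEQ_unique)
  have "(\<lambda>k. l2norm (diag_proj (-K) (\<zeta> (r k)))) \<longlonglongrightarrow> l2norm (diag_proj (-K) z)"
    by (rule l2_tendsto_norm[OF l2_diag_proj[OF \<zeta>l] l2_diag_proj[OF zl] l2_tendsto_diag_proj[OF \<zeta>l zl lim]])
  moreover have "(\<lambda>k. l2norm (diag_proj (-K) (\<zeta> (r k)))) \<longlonglongrightarrow> 0"
    using LIMSEQ_subseq_LIMSEQ[OF small r(1)] by (simp add: o_def)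
  ultimately have "l2norm (diag_proj (-K) z) = 0" by (rule LIMSEQ_unique)
  then have "diag_proj (-K) z = (\<lambda>k. 0)"
    using l2norm_eq_0_iff[OF l2_diag_proj[OF zl]] by blast
  then have "z k = 0" if "k \<notin> K" for k
    using fun_cong[of _ _ k] that unfolding diag_proj_def by fastforce
  then have "z \<in> diag_range K" using zl unfolding diag_range_def by blast
  then have "l2inner z z = 0" using z unfolding ominus_def by blast
  then show False using z_unit l2inner_self[OF zl] by simp
qed

lemma diag_proj_compl_lower_bound:
  assumes T: "closed_subspace T" "T \<subseteq> Hn n"
  shows "\<exists>a>0. \<forall>\<xi>\<in>ominus T (T \<inter> diag_range K). a * l2norm \<xi> \<le> l2norm (diag_proj (-K) \<xi>)"
proof (rule ccontr)
  define P where "P = ominus T (T \<inter> diag_range K)"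
  have W: "T \<inter> diag_range K \<subseteq> l2" using diag_range_subset_l2 by blast
  have Pl: "P \<subseteq> l2" unfolding P_def by (rule ominus_subset_l2[OF closed_subspace_subset_l2[OF T(1)]])
  assume neg: "\<not> ?thesis"
  have "\<exists>\<zeta>\<in>P. l2norm \<zeta> = 1 \<and> l2norm (diag_proj (-K) \<zeta>) < inverse (real (Suc k))" for k
  proof -
    have "\<not> (\<forall>\<xi>\<in>P. inverse (real (Suc k)) * l2norm \<xi> \<le> l2norm (diag_proj (-K) \<xi>))"
    proof
      assume "\<forall>\<xi>\<in>P. inverse (real (Suc k)) * l2norm \<xi> \<le> l2norm (diag_proj (-K) \<xi>)"
      moreover have "inverse (real (Suc k)) > 0" by simp
      ultimately show False using neg unfolding P_def by blast
    qed
    then obtain \<xi> where \<xi>: "\<xi> \<in> P" "l2norm (diag_proj (-K) \<xi>) < inverse (real (Suc k)) * l2norm \<xi>"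
      by (auto simp: not_le)
    have x: "\<xi> \<in> l2" using \<xi>(1) Pl by blast
    have "l2norm \<xi> \<noteq> 0"
      using \<xi>(2) l2norm_nonneg[OF l2_diag_proj[OF x, of "-K"]] by auto
    then have "l2norm (diag_proj (-K) \<xi>) / l2norm \<xi> < inverse (real (Suc k))"
      using \<xi>(2) l2norm_nonneg[OF x] by (simp add: divide_less_eq)
    moreover note ominus_normalize(1,2)[OF T(1) W \<xi>(1)[unfolded P_def] \<open>l2norm \<xi> \<noteq> 0\<close>]
      ominus_normalize(3)[OF T(1) W \<xi>(1)[unfolded P_def] \<open>l2norm \<xi> \<noteq> 0\<close>, of "-K"]
    ultimately show ?thesis unfolding P_def by metis
  qed
  then obtain \<zeta> where \<zeta>: "\<And>k. \<zeta> k \<in> P" "\<And>k. l2norm (\<zeta> k) = 1"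
    "\<And>k. l2norm (diag_proj (-K) (\<zeta> k)) < inverse (real (Suc k))"
    by metis
  have "(\<lambda>k. l2norm (diag_proj (-K) (\<zeta> k))) \<longlonglongrightarrow> 0"
  proof (rule real_tendsto_sandwich[OF _ _ tendsto_const LIMSEQ_inverse_real_of_nat])
    show "\<forall>\<^sub>F k in sequentially. 0 \<le> l2norm (diag_proj (-K) (\<zeta> k))"
      using \<zeta>(1) Pl by (simp add: l2norm_nonneg l2_diag_proj subsetD)
    show "\<forall>\<^sub>F k in sequentially. l2norm (diag_proj (-K) (\<zeta> k)) \<le> inverse (real (Suc k))"
      using \<zeta>(3) by (simp add: less_imp_le)
  qed
  then show False
    by (rule unit_ominus_diag_proj_compl_not_tendsto_0[OF T \<zeta>(1,2)[unfolded P_def]])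
qed

lemma cos_D_lt_1_if_subset_Hn:
  assumes T: "closed_subspace T" "T \<subseteq> Hn n"
  shows "cos_D T < 1"
proof -
  obtain a where a: "\<And>K. a K > 0"
    "\<And>K \<xi>. \<xi> \<in> ominus T (T \<inter> diag_range K) \<Longrightarrow> a K * l2norm \<xi> \<le> l2norm (diag_proj (-K) \<xi>)"
    using diag_proj_compl_lower_bound[OF T] by metis
  text \<open>Only the finitely many K \<subseteq> {..<n} matter, so the bounds a K have a positive minimum.\<close>
  define a0 where "a0 = min 1 (Min (a ` Pow {..<n}))"
  have "0 < Min (a ` Pow {..<n})" using a(1) by (subst Min_gr_iff) auto
  then have a0: "0 < a0" "a0 \<le> 1" unfolding a0_def by auto
  have a0_le: "a0 \<le> a K" if "K \<subseteq> {..<n}" for K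
    unfolding a0_def using that by (auto intro: min.coboundedI2)
  define c where "c = sqrt (1 - a0\<^sup>2)"
  have c: "0 \<le> c" "c < 1" "1 - c\<^sup>2 = a0\<^sup>2"
    unfolding c_def using a0 by (auto simp: power_le_one)
  have "diag_cos_bound T c"
    unfolding diag_cos_bound_def
  proof (intro allI ballI)
    fix J \<xi> assume "\<xi> \<in> ominus T (T \<inter> diag_range J)"
    then have \<xi>: "\<xi> \<in> ominus T (T \<inter> diag_range (J \<inter> {..<n}))" "\<xi> \<in> Hn n"
      using Int_diag_range_Hn[OF T(2), of J] T(2) unfolding ominus_def by auto
    have x: "\<xi> \<in> l2" using \<xi>(2) unfolding Hn_def by blast
    have "a0 * l2norm \<xi> \<le> l2norm (diag_proj (-(J \<inter> {..<n})) \<xi>)"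
      using a(2)[OF \<xi>(1)] a0_le[of "J \<inter> {..<n}"] l2norm_nonneg[OF x]
      by (meson inf_le2 mult_right_mono order_trans)
    then have "(a0 * l2norm \<xi>)\<^sup>2 \<le> (l2norm (diag_proj (-(J \<inter> {..<n})) \<xi>))\<^sup>2"
      using a0 l2norm_nonneg[OF x] by (intro power_mono) auto
    then have "(1 - c\<^sup>2) * (l2norm \<xi>)\<^sup>2 \<le> (l2norm (diag_proj (-(J \<inter> {..<n})) \<xi>))\<^sup>2"
      unfolding c(3) by (simp add: power_mult_distrib)
    then show "l2norm (diag_proj J \<xi>) \<le> c * l2norm \<xi>"
      using l2norm_diag_proj_le_iff[OF x c(1), of "J \<inter> {..<n}"] diag_proj_Hn[OF \<xi>(2), of J] by simp
  qed
  then show ?thesis using cos_D_le_iff[OF T(1) c(1)] c(2) by simp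
qed

lemma cos_D_Int_Hn_le:
  assumes S: "closed_subspace S"
  shows "cos_D (S \<inter> Hn n) \<le> cos_D S"
proof -
  define c where "c = cos_D S"
  have c: "0 \<le> c" unfolding c_def by (rule cos_D_nonneg[OF closed_subspace_subset_l2[OF S]])
  have bound: "diag_cos_bound S c" using cos_D_le_iff[OF S c] unfolding c_def by simp
  have "diag_cos_bound (S \<inter> Hn n) c"
    unfolding diag_cos_bound_def
  proof (intro allI ballI)
    fix J \<xi> assume "\<xi> \<in> ominus (S \<inter> Hn n) (S \<inter> Hn n \<inter> diag_range J)"
    then have \<xi>: "\<xi> \<in> ominus S (S \<inter> diag_range (J \<inter> {..<n}))" "\<xi> \<in> Hn n"
      unfolding ominus_def Int_Hn_Int_diag_range by auto
    have "l2norm (diag_proj (J \<inter> {..<n}) \<xi>) \<le> c * l2norm \<xi>"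
      using bound \<xi>(1) unfolding diag_cos_bound_def by blast
    then show "l2norm (diag_proj J \<xi>) \<le> c * l2norm \<xi>"
      using diag_proj_Hn[OF \<xi>(2), of J] by simp
  qed
  then show ?thesis
    using cos_D_le_iff[OF closed_subspace_Int_Hn[OF S] c] unfolding c_def by simp
qed

text \<open>The projection of x onto S \<inter> D_{..<n} differs from x by a vector of S orthogonal to
  S \<inter> D_{..<n}; the angle bound controls it by the tail of x outside {..<n}.\<close>

lemma sections_dense_if_cos_D_lt_1:
  assumes S: "closed_subspace S" and c1: "cos_D S < 1" and x: "x \<in> S" and \<epsilon>: "\<epsilon> > 0"
  shows "\<exists>n\<ge>1. \<exists>y\<in>S \<inter> Hn n. l2norm (\<lambda>k. x k - y k) < \<epsilon>"
proof -
  have Sl: "S \<subseteq> l2" by (rule closed_subspace_subset_l2[OF S])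
  have xl: "x \<in> l2" using x Sl by blast
  define c where "c = cos_D S"
  have c: "0 \<le> c" "c < 1" unfolding c_def using cos_D_nonneg[OF Sl] c1 by auto
  then have s0: "0 < 1 - c\<^sup>2" by (simp add: power_less_one_iff abs_less_iff)
  have "\<forall>\<^sub>F n in sequentially. l2norm (diag_proj (-{..<n}) x) < \<epsilon> * sqrt (1 - c\<^sup>2)"
    using l2norm_diag_proj_tail[OF xl] \<epsilon> s0 by (intro order_tendstoD(2)) auto
  then have "\<forall>\<^sub>F n in sequentially. 1 \<le> n \<and> l2norm (diag_proj (-{..<n}) x) < \<epsilon> * sqrt (1 - c\<^sup>2)"
    by (intro eventually_conj eventually_ge_at_top)
  then obtain n where n: "n \<ge> 1" "l2norm (diag_proj (-{..<n}) x) < \<epsilon> * sqrt (1 - c\<^sup>2)"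
    using eventually_happens'[OF sequentially_bot] by blast
  define J where "J = {..<n}"
  have W: "closed_subspace (S \<inter> diag_range J)" "S \<inter> diag_range J \<subseteq> Hn n"
    unfolding J_def Hn_eq_diag_range by (auto intro: closed_subspace_Int[OF S closed_subspace_diag_range])
  obtain v where v: "v \<in> S \<inter> diag_range J" and orth: "\<forall>w\<in>S \<inter> diag_range J. l2inner (\<lambda>k. x k - v k) w = 0"
    using orthogonal_projection_exists[OF W xl] by blast
  define \<xi> where "\<xi> = (\<lambda>k. x k - v k)"
  have \<xi>S: "\<xi> \<in> ominus S (S \<inter> diag_range J)"
    unfolding ominus_def \<xi>_def using closed_subspace_diff[OF S x] v orth by blast
  have \<xi>l: "\<xi> \<in> l2" using \<xi>S Sl unfolding ominus_def by blast
  have "l2norm (diag_proj J \<xi>) \<le> c * l2norm \<xi>"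
    using cos_D_le_iff[OF S c(1)] \<xi>S unfolding c_def diag_cos_bound_def by blast
  then have "(1 - c\<^sup>2) * (l2norm \<xi>)\<^sup>2 \<le> (l2norm (diag_proj (-J) \<xi>))\<^sup>2"
    using l2norm_diag_proj_le_iff[OF \<xi>l c(1)] by blast
  also have "diag_proj (-J) \<xi> = diag_proj (-J) x"
    using v unfolding \<xi>_def diag_proj_def diag_range_def by auto
  also have "(l2norm (diag_proj (-J) x))\<^sup>2 < (\<epsilon> * sqrt (1 - c\<^sup>2))\<^sup>2"
    using n(2) l2norm_nonneg[OF l2_diag_proj[OF xl]] unfolding J_def by (intro power_strict_mono) auto
  also have "\<dots> = (1 - c\<^sup>2) * \<epsilon>\<^sup>2" using s0 by (simp add: power_mult_distrib)
  finally have "(l2norm \<xi>)\<^sup>2 < \<epsilon>\<^sup>2" using s0 by simp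
  then have "l2norm \<xi> < \<epsilon>" using \<epsilon> by (simp add: power_less_imp_less_base)
  moreover have "v \<in> S \<inter> Hn n" using v unfolding J_def Hn_eq_diag_range by blast
  ultimately show ?thesis using n(1) unfolding \<xi>_def by blast
qed

lemma l2norm_le_if_l2inner_eq:
  assumes "u \<in> l2" "v \<in> l2" "l2inner u v = l2inner v v"
  shows "l2norm v \<le> l2norm u"
proof -
  have "(l2norm v)\<^sup>2 = cmod (l2inner u v)"
    using assms(3) l2inner_self[OF assms(2)] by (simp add: norm_power)
  then have "(l2norm v)\<^sup>2 \<le> l2norm u * l2norm v"
    using l2_cauchy_schwarz[OF assms(1,2)] by simp
  then show ?thesis
    using l2norm_nonneg[OF assms(1)] l2norm_nonneg[OF assms(2)]
    by (cases "l2norm v = 0") (auto simp: power2_eq_square)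
qed

text \<open>A vector orthogonal to S \<inter> D_J is approximated by one of S_n orthogonal to S_n \<inter> D_J: correct
  an approximant y \<in> S_n by its projection onto S \<inter> D_{J \<inter> {..<n}}, which is at most as long as
  y - \<xi>.\<close>

lemma ominus_section_approximant:
  assumes S: "closed_subspace S" and \<xi>: "\<xi> \<in> ominus S (S \<inter> diag_range J)" and y: "y \<in> S \<inter> Hn n"
  shows "\<exists>y'\<in>ominus (S \<inter> Hn n) (S \<inter> Hn n \<inter> diag_range J).
    l2norm (\<lambda>k. \<xi> k - y' k) \<le> 2 * l2norm (\<lambda>k. \<xi> k - y k)"
proof -
  define W where "W = S \<inter> diag_range (J \<inter> {..<n})"
  have Sl: "S \<subseteq> l2" by (rule closed_subspace_subset_l2[OF S])
  have W: "closed_subspace W" "W \<subseteq> Hn n"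
    unfolding W_def Hn_eq_diag_range diag_range_def
    using closed_subspace_Int[OF S closed_subspace_diag_range, of "J \<inter> {..<n}"]
    by (auto simp: diag_range_def)
  have xl: "\<xi> \<in> l2" and yl: "y \<in> l2" using \<xi> y Sl unfolding ominus_def by auto
  obtain v where v: "v \<in> W" and orth: "\<forall>w\<in>W. l2inner (\<lambda>k. y k - v k) w = 0"
    using orthogonal_projection_exists[OF W yl] by blast
  have vl: "v \<in> l2" using v Sl unfolding W_def by blast
  define y' where "y' = (\<lambda>k. y k - v k)"
  have y'l: "y' \<in> l2" unfolding y'_def by (rule l2_diff[OF yl vl])
  have "v \<in> S \<inter> Hn n" using v W(2) unfolding W_def by blast
  then have "y' \<in> ominus (S \<inter> Hn n) (S \<inter> Hn n \<inter> diag_range J)"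
    unfolding ominus_def Int_Hn_Int_diag_range W_def[symmetric] y'_def
    using closed_subspace_diff[OF closed_subspace_Int_Hn[OF S] y] orth by blast
  moreover have "l2norm (\<lambda>k. \<xi> k - y' k) \<le> 2 * l2norm (\<lambda>k. \<xi> k - y k)"
  proof -
    have "l2inner \<xi> v = 0" using \<xi> v unfolding W_def ominus_def diag_range_def by auto
    then have "l2inner (\<lambda>k. y k - \<xi> k) v = l2inner v v"
      using orth[rule_format, OF v] unfolding l2inner_diff_left[OF yl xl vl]
      by (simp add: l2inner_diff_left[OF yl vl vl])
    then have "l2norm v \<le> l2norm (\<lambda>k. \<xi> k - y k)"
      using l2norm_le_if_l2inner_eq[OF l2_diff[OF yl xl] vl] l2norm_diff_commute[of y \<xi>] by simp
    moreover have "l2norm (\<lambda>k. \<xi> k - y' k) \<le> l2norm (\<lambda>k. \<xi> k - y k) + l2norm v"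
      using l2norm_triangle[OF l2_diff[OF xl yl] vl] unfolding y'_def by (simp add: algebra_simps)
    ultimately show ?thesis by simp
  qed
  ultimately show ?thesis by blast
qed

lemma l2norm_diag_proj_perturb:
  assumes x: "x \<in> l2" and y: "y \<in> l2" and c: "0 \<le> c"
    and bound: "l2norm (diag_proj J y) \<le> c * l2norm y"
  shows "l2norm (diag_proj J x) \<le> c * l2norm x + (c + 1) * l2norm (\<lambda>k. x k - y k)"
proof -
  have "l2norm (diag_proj J x) \<le> l2norm (diag_proj J y) + l2norm (\<lambda>k. x k - y k)"
    using l2norm_le_add_diff[OF l2_diag_proj[OF x, of J] l2_diag_proj[OF y, of J]]
      l2norm_diag_proj_le[OF l2_diff[OF x y], of J]
    unfolding diag_proj_diff by simp
  moreover have "c * l2norm y \<le> c * (l2norm x + l2norm (\<lambda>k. x k - y k))"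
    using l2norm_le_add_diff[OF y x] l2norm_diff_commute[of y x] c
    by (intro mult_left_mono) simp_all
  ultimately show ?thesis using bound by (simp add: algebra_simps)
qed

lemma cos_D_le_if_sections:
  assumes S: "closed_subspace S"
    and dense: "\<forall>x\<in>S. \<forall>\<epsilon>>0. \<exists>n\<ge>1. \<exists>y\<in>S \<inter> Hn n. l2norm (\<lambda>k. x k - y k) < \<epsilon>"
    and sections: "\<And>n. n \<ge> 1 \<Longrightarrow> cos_D (S \<inter> Hn n) \<le> c"
  shows "cos_D S \<le> c"
proof -
  have Sl: "S \<subseteq> l2" by (rule closed_subspace_subset_l2[OF S])
  have "S \<inter> Hn 1 \<subseteq> l2" using Sl by blast
  then have c: "0 \<le> c"
    using cos_D_nonneg[of "S \<inter> Hn 1"] sections[of 1] by linarith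
  have bound: "diag_cos_bound (S \<inter> Hn n) c" if "n \<ge> 1" for n
    using cos_D_le_iff[OF closed_subspace_Int_Hn[OF S] c] sections[OF that] by blast
  have approx: "l2norm (diag_proj J \<xi>) \<le> c * l2norm \<xi> + e"
    if \<xi>: "\<xi> \<in> ominus S (S \<inter> diag_range J)" and e: "e > 0" for J \<xi> e
  proof -
    define \<delta> where "\<delta> = e / (2 * (c + 1))"
    have \<delta>: "\<delta> > 0" unfolding \<delta>_def using c e by simp
    have xS: "\<xi> \<in> S" and xl: "\<xi> \<in> l2" using \<xi> Sl unfolding ominus_def by auto
    obtain n y where n: "n \<ge> 1" and y: "y \<in> S \<inter> Hn n" and xy: "l2norm (\<lambda>k. \<xi> k - y k) < \<delta>"
      using dense xS \<delta> by blast
    obtain y' where y': "y' \<in> ominus (S \<inter> Hn n) (S \<inter> Hn n \<inter> diag_range J)"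
      and xy': "l2norm (\<lambda>k. \<xi> k - y' k) \<le> 2 * l2norm (\<lambda>k. \<xi> k - y k)"
      using ominus_section_approximant[OF S \<xi> y] by blast
    have y'l: "y' \<in> l2" using y' Sl unfolding ominus_def by auto
    have "(c + 1) * l2norm (\<lambda>k. \<xi> k - y' k) \<le> (c + 1) * (2 * \<delta>)"
      using xy xy' c by (intro mult_left_mono) auto
    also have "\<dots> = e" unfolding \<delta>_def using c by (simp add: field_simps)
    finally show ?thesis
      using l2norm_diag_proj_perturb[OF xl y'l c] bound[OF n] y' unfolding diag_cos_bound_def
      by fastforce
  qed
  have "diag_cos_bound S c"
    unfolding diag_cos_bound_def
  proof (intro allI ballI)
    fix J \<xi> assume "\<xi> \<in> ominus S (S \<inter> diag_range J)"
    then show "l2norm (diag_proj J \<xi>) \<le> c * l2norm \<xi>"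
      by (rule field_le_epsilon[OF approx])
  qed
  then show ?thesis using cos_D_le_iff[OF S c] by blast
qed

theorem proposition4p13:
  assumes "closed_subspace S"
  shows "B_compatible S \<longleftrightarrow>
    ((\<forall>x\<in>S. \<forall>\<epsilon>>0. \<exists>n\<ge>1. \<exists>y\<in>S \<inter> Hn n. l2norm (\<lambda>k. x k - y k) < \<epsilon>)
     \<and> (\<exists>M>0. \<forall>n\<ge>1. K_D (S \<inter> Hn n) \<le> M))"
proof -
  have Sl: "S \<subseteq> l2" and Snl: "\<And>n. S \<inter> Hn n \<subseteq> l2"
    using closed_subspace_subset_l2[OF assms] by auto
  text \<open>K_D T = 1 / sqrt (1 - (cos_D T)^2) degenerates to 0 when cos_D T = 1, so the
    hypothesis K_D (S \<inter> Hn n) \<le> M is informative only because of the following fact.\<close>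
  have Sn_lt_1: "cos_D (S \<inter> Hn n) < 1" for n
    by (rule cos_D_lt_1_if_subset_Hn[OF closed_subspace_Int_Hn[OF assms]]) blast
  show ?thesis
    unfolding B_compatible_def
  proof (intro iffI conjI, goal_cases)
    case 1
    then show ?case using sections_dense_if_cos_D_lt_1[OF assms] by blast
  next
    case 2
    define M where "M = K_D S"
    have M: "M > 0"
      unfolding M_def K_D_def using 2 cos_D_nonneg[OF Sl] by (simp add: power_less_one_iff abs_less_iff)
    have "cos_D S \<le> sqrt (1 - 1 / M\<^sup>2)" using K_D_le_iff[OF Sl 2 M] unfolding M_def by simp
    then have "K_D (S \<inter> Hn n) \<le> M" for n
      using K_D_le_iff[OF Snl Sn_lt_1 M] cos_D_Int_Hn_le[OF assms, of n] by simp
    then show ?case using M by blast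
  next
    case 3
    then obtain M where M: "M > 0" "\<And>n. n \<ge> 1 \<Longrightarrow> K_D (S \<inter> Hn n) \<le> M" by blast
    have "cos_D S \<le> sqrt (1 - 1 / M\<^sup>2)"
      using cos_D_le_if_sections[OF assms conjunct1[OF 3]] K_D_le_iff[OF Snl Sn_lt_1 M(1)] M(2) by blast
    also have "\<dots> < 1" using M(1) by simp
    finally show ?case .
  qed
qed

end
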